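(* Let $S \subseteq \mathbb{R}^r$ be a linear subspace, let $0 \le d \le r$, and let $C(S,d)$ be the associated s-cone. Every nonzero vector $x \in C(S,d)$ is a conformal sum of elementary vectors of $C(S,d)$; that is, there exists a finite set $E \subseteq C(S,d)$ of elementary vectors such that \[ x = \sum_{e \in E} e \quad \text{with } \operatorname{sign}(e) \le \operatorname{sign}(x) \text{ for all } e \in E. \] Moreover, the set $E$ can be chosen such that its elements are linearly independent; in particular, they can be ordered such that every $e \in E$ has a component which is nonzero in $e$ but zero in all its predecessors in the ordering. Then $|E| \le \dim(S)$ and $|E| \le |\operatorname{supp}(x)|$.
   Context: For $x \in \mathbb{R}^n$, $\operatorname{supp}(x) = \{ i \mid x_i \neq 0\}$, and $\operatorname{sign}(x) \in \{-,0,+\}^n$ is obtained by applying the sign function componentwise. The relations $0 < -$ and $0 < +$ induce a partial order on $\{-,0,+\}^n$ (componentwise; $-$ and $+$ are incomparable), and for sign vectors $X \le Y$ means this holds in every component. For a linear subspace $S \subseteq \mathbb{R}^r$ and $0 \le d \le r$, the s-cone is $C(S,d) = \{ (x,y) \in \mathbb{R}^{(r-d)+d} \mid (x,y) \in S,\ y \ge 0\}$ (the last $d$ coordinates are required to be nonnegative). A nonzero vector $e \in C(S,d)$ is called elementary if it is support-minimal: for every nonzero $x' \in C(S,d)$, $\operatorname{supp}(x') \subseteq \operatorname{supp}(e)$ implies $\operatorname{supp}(x') = \operatorname{supp}(e)$. *)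

theory Defs
  imports "HOL-Analysis.Analysis"
begin

text \<open>Vectors of R^r are modelled as real ^ 'n with CARD('n) = r.
  The sign-constrained coordinates (the paper's last d coordinates) form an index set D.\<close>

definition supp :: "real ^ 'n \<Rightarrow> 'n set" where
  "supp x = {i. x $ i \<noteq> 0}"

definition sign_vec :: "real ^ 'n \<Rightarrow> 'n \<Rightarrow> real" where
  "sign_vec x = (\<lambda>i. sgn (x $ i))"

definition sign_le :: "('n \<Rightarrow> real) \<Rightarrow> ('n \<Rightarrow> real) \<Rightarrow> bool" where
  "sign_le X Y \<longleftrightarrow> (\<forall>i. X i = 0 \<or> X i = Y i)"

definition s_cone :: "(real ^ 'n) set \<Rightarrow> 'n set \<Rightarrow> (real ^ 'n) set" where
  "s_cone S D = {x. x \<in> S \<and> (\<forall>i\<in>D. x $ i \<ge> 0)}"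

definition elementary :: "(real ^ 'n) set \<Rightarrow> 'n set \<Rightarrow> real ^ 'n \<Rightarrow> bool" where
  "elementary S D e \<longleftrightarrow> e \<in> s_cone S D \<and> e \<noteq> 0 \<and>
     (\<forall>x'\<in>s_cone S D. x' \<noteq> 0 \<and> supp x' \<subseteq> supp e \<longrightarrow> supp x' = supp e)"

end

theory Submission
  imports Defs
begin

text \<open>Take an elementary vector whose sign pattern conforms to \<open>x\<close> (a vector of minimal support
  among those conforming to \<open>x\<close> is elementary) and subtract the largest positive multiple of it
  that keeps the difference conformal to \<open>x\<close>. This kills a coordinate of \<open>x\<close>, so induction on
  the support size decomposes \<open>x\<close>. Each peeled-off summand is nonzero at a coordinate where the
  remainder, hence every summand found later, vanishes; listing the summands in reverse order of
  discovery makes them triangular, which gives linear independence.\<close>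

definition conforms :: "real ^ 'n \<Rightarrow> real ^ 'n \<Rightarrow> bool" where
  "conforms z y \<longleftrightarrow> (\<forall>i. z $ i = 0 \<or> z $ i * y $ i > 0)"

lemma conforms_iff: "conforms z y \<longleftrightarrow> (\<forall>i. 0 \<le> z $ i * y $ i \<and> (y $ i = 0 \<longrightarrow> z $ i = 0))"
  unfolding conforms_def by (intro iff_allI) (auto simp: less_le)

lemma conforms_refl: "conforms y y"
  unfolding conforms_def by auto

lemma conforms_trans:
  assumes "conforms a b" and "conforms b c"
  shows "conforms a c"
  unfolding conforms_def
proof
  fix i
  show "a $ i = 0 \<or> 0 < a $ i * c $ i"
    using assms[unfolded conforms_def, rule_format, of i] by (auto simp: zero_less_mult_iff)
qed

lemma conforms_scaleR: "conforms z y \<Longrightarrow> t > 0 \<Longrightarrow> conforms (t *\<^sub>R z) y"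
  unfolding conforms_def by (auto simp: mult.assoc)

lemma conforms_supp_subset: "conforms z y \<Longrightarrow> supp z \<subseteq> supp y"
  unfolding conforms_def supp_def by auto

lemma conforms_imp_sign_le:
  assumes "conforms z y"
  shows "sign_le (sign_vec z) (sign_vec y)"
  unfolding sign_le_def sign_vec_def
proof
  fix i
  have "z $ i = 0 \<or> 0 < z $ i * y $ i"
    using assms by (simp add: conforms_def)
  then show "sgn (z $ i) = 0 \<or> sgn (z $ i) = sgn (y $ i)"
    by (auto simp: zero_less_mult_iff)
qed

lemma conforms_in_s_cone:
  assumes "conforms z y" and "y \<in> s_cone S D" and "z \<in> S"
  shows "z \<in> s_cone S D"
  unfolding s_cone_def
proof (intro CollectI conjI ballI assms(3))
  fix i assume "i \<in> D"
  then have "0 \<le> y $ i"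
    using assms(2) by (simp add: s_cone_def)
  moreover have "0 \<le> z $ i * y $ i" and "y $ i = 0 \<longrightarrow> z $ i = 0"
    using assms(1) by (auto simp: conforms_iff)
  ultimately show "0 \<le> z $ i"
    by (auto simp: zero_le_mult_iff)
qed

lemma supp_nonempty: "x \<noteq> 0 \<Longrightarrow> supp x \<noteq> {}"
  unfolding supp_def by (auto simp: vec_eq_iff)

text \<open>The step size is the largest \<open>t\<close> with \<open>t * (w\<^sub>i * y\<^sub>i) \<le> y\<^sub>i\<^sup>2\<close> at every coordinate
  where \<open>w\<close> and \<open>y\<close> have the same sign.\<close>

lemma exists_conforming_step:
  fixes y w :: "real ^ 'n"
  assumes "supp w \<subseteq> supp y" and "\<exists>i. 0 < w $ i * y $ i"
  shows "\<exists>t>0. conforms (y - t *\<^sub>R w) y \<and> (\<exists>i. w $ i \<noteq> 0 \<and> (y - t *\<^sub>R w) $ i = 0)"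
proof -
  define P where "P = {i. 0 < w $ i * y $ i}"
  define ratio where "ratio i = (y $ i * y $ i) / (w $ i * y $ i)" for i
  define t where "t = Min (ratio ` P)"
  have "P \<noteq> {}"
    using assms(2) by (auto simp: P_def)
  then have "t \<in> ratio ` P"
    unfolding t_def by (intro Min_in) auto
  then obtain i0 where i0: "i0 \<in> P" "t = ratio i0"
    by blast
  have y_square_pos: "0 < y $ i * y $ i" if "i \<in> P" for i
    using that by (auto simp: P_def zero_less_mult_iff)
  have ratio_mult: "ratio i * (w $ i * y $ i) = y $ i * y $ i" if "i \<in> P" for i
    using that by (auto simp: ratio_def P_def)
  have t_pos: "t > 0"
    unfolding i0(2) ratio_def using i0(1) y_square_pos[OF i0(1)]
    by (intro divide_pos_pos) (auto simp: P_def)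
  have t_bound: "t * (w $ i * y $ i) \<le> y $ i * y $ i" if "i \<in> P" for i
  proof -
    have "t \<le> ratio i"
      using that by (simp add: t_def)
    then have "t * (w $ i * y $ i) \<le> ratio i * (w $ i * y $ i)"
      using that by (intro mult_right_mono) (auto simp: P_def)
    then show ?thesis
      using ratio_mult[OF that] by simp
  qed
  have product: "(y - t *\<^sub>R w) $ i * y $ i = y $ i * y $ i - t * (w $ i * y $ i)" for i
    by (simp add: algebra_simps)
  have "conforms (y - t *\<^sub>R w) y"
    unfolding conforms_iff
  proof (intro allI conjI impI)
    fix i
    show "0 \<le> (y - t *\<^sub>R w) $ i * y $ i"
    proof (cases "i \<in> P")
      case False
      then have "t * (w $ i * y $ i) \<le> 0"
        using t_pos by (simp add: P_def mult_nonneg_nonpos)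
      then show ?thesis
        unfolding product using zero_le_square[of "y $ i"] by linarith
    qed (use t_bound product in simp)
    show "(y - t *\<^sub>R w) $ i = 0" if "y $ i = 0"
      using that assms(1) by (auto simp: supp_def)
  qed
  moreover have "(y - t *\<^sub>R w) $ i0 = 0"
  proof -
    have "t * (w $ i0 * y $ i0) = y $ i0 * y $ i0"
      by (simp only: i0(2) ratio_mult[OF i0(1)])
    then have "(y - t *\<^sub>R w) $ i0 * y $ i0 = 0"
      by (simp only: product diff_self)
    then show ?thesis
      using y_square_pos[OF i0(1)] by auto
  qed
  moreover have "w $ i0 \<noteq> 0"
    using i0(1) by (auto simp: P_def)
  ultimately show ?thesis
    using t_pos by blast
qed

lemma exists_smaller_conforming:
  assumes "subspace S" and "y \<in> S" and "v \<in> S" and "v \<noteq> 0" and "supp v \<subset> supp y"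
  shows "\<exists>z\<in>S. z \<noteq> 0 \<and> conforms z y \<and> supp z \<subset> supp y"
proof -
  obtain i0 where i0: "v $ i0 \<noteq> 0"
    using supp_nonempty[OF assms(4)] by (auto simp: supp_def)
  then have "y $ i0 \<noteq> 0"
    using assms(5) by (auto simp: supp_def)
  define w where "w = (if 0 < v $ i0 * y $ i0 then v else - v)"
  have w_S: "w \<in> S"
    using assms(1,3) by (simp add: w_def subspace_neg)
  have supp_w: "supp w = supp v"
    by (auto simp: w_def supp_def)
  have "0 < w $ i0 * y $ i0"
    using i0 \<open>y $ i0 \<noteq> 0\<close> by (auto simp: w_def zero_less_mult_iff)
  then obtain t where "t > 0" and conf: "conforms (y - t *\<^sub>R w) y"
      and killed: "\<exists>i. w $ i \<noteq> 0 \<and> (y - t *\<^sub>R w) $ i = 0"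
    using exists_conforming_step[of w y] assms(5) supp_w by auto
  define z where "z = y - t *\<^sub>R w"
  obtain j where j: "j \<in> supp y" "j \<notin> supp v"
    using assms(5) by auto
  have "z \<in> S"
    using assms(1,2) w_S by (simp add: z_def subspace_diff subspace_scale)
  moreover have "z \<noteq> 0"
  proof -
    have "w $ j = 0"
      using j(2) supp_w by (auto simp: supp_def)
    then have "z $ j = y $ j"
      by (simp add: z_def)
    then show ?thesis
      using j(1) by (auto simp: supp_def)
  qed
  moreover have "supp z \<subset> supp y"
  proof -
    obtain i where "w $ i \<noteq> 0" "z $ i = 0"
      using killed by (auto simp: z_def)
    then have "i \<in> supp y" "i \<notin> supp z"
      using assms(5) supp_w by (auto simp: supp_def)
    then show ?thesis
      using conforms_supp_subset[OF conf[folded z_def]] by blast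
  qed
  ultimately show ?thesis
    using conf[folded z_def] by blast
qed

lemma exists_elementary_conforming:
  assumes "subspace S" and "x \<in> s_cone S D" and "x \<noteq> 0"
  shows "\<exists>e. elementary S D e \<and> conforms e x"
proof -
  define Y where "Y = {y \<in> S. y \<noteq> 0 \<and> conforms y x}"
  have "x \<in> Y"
    using assms(2,3) conforms_refl by (auto simp: Y_def s_cone_def)
  then obtain y where "y \<in> Y" and y_min: "\<And>y'. y' \<in> Y \<Longrightarrow> card (supp y) \<le> card (supp y')"
    using ex_has_least_nat[of "\<lambda>y. y \<in> Y" x "\<lambda>y. card (supp y)"] by blast
  then have y: "y \<in> S" "y \<noteq> 0" "conforms y x"
    by (auto simp: Y_def)
  have "elementary S D y"
    unfolding elementary_def
  proof (intro conjI ballI impI)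
    show "y \<in> s_cone S D"
      using conforms_in_s_cone[OF y(3) assms(2) y(1)] .
    fix v assume v: "v \<in> s_cone S D" "v \<noteq> 0 \<and> supp v \<subseteq> supp y"
    show "supp v = supp y"
    proof (rule ccontr)
      assume "supp v \<noteq> supp y"
      then obtain z where "z \<in> S" "z \<noteq> 0" "conforms z y" "supp z \<subset> supp y"
        using exists_smaller_conforming[OF assms(1) y(1), of v] v by (auto simp: s_cone_def)
      then have "z \<in> Y" and "card (supp z) < card (supp y)"
        using conforms_trans[OF _ y(3)] psubset_card_mono[OF finite] by (auto simp: Y_def)
      then show False
        using y_min by fastforce
    qed
  qed (use y in auto)
  then show ?thesis
    using y(3) by blast
qed

definition triangular :: "(real ^ 'n) list \<Rightarrow> bool" where
  "triangular es \<longleftrightarrow> (\<forall>k<length es. \<exists>i. (es ! k) $ i \<noteq> 0 \<and> (\<forall>j<k. (es ! j) $ i = 0))"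

lemma triangular_Nil: "triangular []"
  by (simp add: triangular_def)

lemma triangular_snoc:
  "triangular (es @ [e]) \<longleftrightarrow> triangular es \<and> (\<exists>i. e $ i \<noteq> 0 \<and> (\<forall>v\<in>set es. v $ i = 0))"
  unfolding triangular_def
  by (auto simp: nth_append less_Suc_eq all_set_conv_all_nth)

lemma triangular_imp_distinct_independent:
  "triangular es \<Longrightarrow> distinct es \<and> independent (set es)"
proof (induction es rule: rev_induct)
  case (snoc e es)
  then obtain i where i: "e $ i \<noteq> 0" "\<forall>v\<in>set es. v $ i = 0" and "triangular es"
    by (auto simp: triangular_snoc)
  have "span (set es) \<subseteq> {v. v $ i = 0}"
    using i(2) by (intro span_minimal) (auto simp: subspace_special_hyperplane)
  then have "e \<notin> span (set es)"
    using i(1) by auto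
  moreover have "distinct es" "independent (set es)"
    using snoc.IH \<open>triangular es\<close> by auto
  ultimately show ?case
    using span_base by (auto simp: independent_insert)
qed (simp add: independent_empty)

lemma exists_elementary_summand:
  assumes "subspace S" and "x \<in> s_cone S D" and "x \<noteq> 0"
  shows "\<exists>e i. elementary S D e \<and> conforms e x \<and> conforms (x - e) x \<and> e $ i \<noteq> 0 \<and> (x - e) $ i = 0"
proof -
  obtain e0 where e0: "elementary S D e0" "conforms e0 x"
    using exists_elementary_conforming[OF assms] by blast
  have "e0 \<noteq> 0"
    using e0(1) by (simp add: elementary_def)
  then obtain i where "e0 $ i \<noteq> 0"
    using supp_nonempty by (auto simp: supp_def)
  then have "0 < e0 $ i * x $ i"
    using e0(2) by (auto simp: conforms_def)
  then obtain t i0 where t: "t > 0" and step: "conforms (x - t *\<^sub>R e0) x"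
      and i0: "e0 $ i0 \<noteq> 0" "(x - t *\<^sub>R e0) $ i0 = 0"
    using exists_conforming_step[of e0 x] conforms_supp_subset[OF e0(2)] by blast
  have "elementary S D (t *\<^sub>R e0)"
    using e0(1) t assms(1)
    by (auto simp: elementary_def s_cone_def supp_def subspace_scale)
  moreover have "conforms (t *\<^sub>R e0) x"
    using conforms_scaleR[OF e0(2) t] .
  moreover have "(t *\<^sub>R e0) $ i0 \<noteq> 0"
    using i0(1) t by simp
  ultimately show ?thesis
    using step i0(2) by blast
qed

lemma conformal_elementary_decomposition:
  assumes "subspace S" and "x \<in> s_cone S D"
  shows "\<exists>es. (\<forall>e\<in>set es. elementary S D e \<and> conforms e x) \<and> x = sum_list es
           \<and> triangular es \<and> length es \<le> card (supp x)"
  using assms(2)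
proof (induction "card (supp x)" arbitrary: x rule: less_induct)
  case less
  show ?case
  proof (cases "x = 0")
    case True
    then show ?thesis
      using triangular_Nil by (intro exI[of _ "[]"]) auto
  next
    case False
    then obtain e i where e: "elementary S D e" "conforms e x"
        and z_conf: "conforms (x - e) x" and i: "e $ i \<noteq> 0" "(x - e) $ i = 0"
      using exists_elementary_summand[OF assms(1) less.prems] by blast
    define z where "z = x - e"
    have "z \<in> S"
      using less.prems e(1) assms(1) by (simp add: z_def elementary_def s_cone_def subspace_diff)
    then have "z \<in> s_cone S D"
      using conforms_in_s_cone[OF z_conf[folded z_def] less.prems] by simp
    have "x $ i \<noteq> 0"
      using e(2) i(1) by (auto simp: conforms_def)
    then have "supp z \<subset> supp x"
      using conforms_supp_subset[OF z_conf] i(2) by (auto simp: z_def supp_def)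
    then have "card (supp z) < card (supp x)"
      using psubset_card_mono[OF finite] by blast
    then obtain es where es: "\<forall>v\<in>set es. elementary S D v \<and> conforms v z" "z = sum_list es"
        "triangular es" "length es \<le> card (supp z)"
      using less.hyps \<open>z \<in> s_cone S D\<close> by blast
    have "\<forall>v\<in>set es. v $ i = 0"
      using es(1) i(2) by (auto simp: z_def conforms_iff)
    then have "triangular (es @ [e])"
      using es(3) i(1) by (auto simp: triangular_snoc)
    moreover have "\<forall>v\<in>set (es @ [e]). elementary S D v \<and> conforms v x"
      using es(1) e conforms_trans[OF _ z_conf[folded z_def]] by auto
    moreover have "x = sum_list (es @ [e])"
      using es(2) by (simp add: z_def diff_eq_eq)
    ultimately show ?thesis
      using es(4) \<open>card (supp z) < card (supp x)\<close> by (intro exI[of _ "es @ [e]"]) auto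
  qed
qed

theorem theorem1:
  fixes S :: "(real ^ 'n) set" and D :: "'n set" and x :: "real ^ 'n"
  assumes "subspace S"
    and "x \<in> s_cone S D" and "x \<noteq> 0"
  shows "\<exists>E. finite E \<and> E \<subseteq> s_cone S D \<and> (\<forall>e\<in>E. elementary S D e)
           \<and> x = (\<Sum>e\<in>E. e) \<and> (\<forall>e\<in>E. sign_le (sign_vec e) (sign_vec x))
           \<and> independent E
           \<and> (\<exists>es. distinct es \<and> set es = E \<and>
                (\<forall>k<length es. \<exists>i. (es ! k) $ i \<noteq> 0 \<and> (\<forall>j<k. (es ! j) $ i = 0)))
           \<and> card E \<le> dim S \<and> card E \<le> card (supp x)"
proof -
  obtain es where es: "\<forall>e\<in>set es. elementary S D e \<and> conforms e x" "x = sum_list es"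
      "triangular es" "length es \<le> card (supp x)"
    using conformal_elementary_decomposition[OF assms(1,2)] by blast
  have indep: "distinct es" "independent (set es)"
    using triangular_imp_distinct_independent[OF es(3)] by auto
  have cone: "set es \<subseteq> s_cone S D"
    using es(1) by (auto simp: elementary_def)
  have "card (set es) \<le> dim S"
    using independent_card_le_dim[OF _ indep(2)] cone by (auto simp: s_cone_def)
  moreover have "\<forall>e\<in>set es. sign_le (sign_vec e) (sign_vec x)"
    using es(1) conforms_imp_sign_le by blast
  moreover have "x = (\<Sum>e\<in>set es. e)"
    using es(2) indep(1) by (simp add: distinct_sum_list_conv_Sum)
  moreover have "card (set es) \<le> card (supp x)"
    using es(4) indep(1) by (simp add: distinct_card)
  moreover have "\<forall>e\<in>set es. elementary S D e"
    using es(1) by blast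
  ultimately show ?thesis
    using cone indep es(3) unfolding triangular_def by blast
qed

end
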